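(* For every integer $k\ge0$ and every real $x\in[0,1]$, $$\log_2(1+kx)\ge\log_2(1+k)\cdot\log_2(1+x).$$ *)

theory Defs
  imports Complex_Main
begin

end

theory Submission
  imports Defs "HOL-Analysis.Analysis"
begin

text \<open>With \<open>a = log 2 (1 + k)\<close> the claim reads \<open>(1 + x) powr a \<le> 1 + k x\<close>. For \<open>a \<ge> 1\<close>
  the function \<open>t powr a\<close> is convex, so on \<open>[1, 2]\<close> it lies below its chord, which joins
  \<open>(1, 1)\<close> to \<open>(2, 1 + k)\<close>.\<close>

lemma one_plus_powr_le_chord:
  fixes a x :: real
  assumes "1 \<le> a" and "0 \<le> x" and "x \<le> 1"
  shows "(1 + x) powr a \<le> 1 + (2 powr a - 1) * x"
proof -
  have "((1 - x) *\<^sub>R 1 + x *\<^sub>R 2) powr a \<le> (1 - x) * 1 powr a + x * 2 powr a"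
    by (rule convex_onD[OF powr_convex[OF \<open>1 \<le> a\<close>]]) (use assms in auto)
  then show ?thesis
    by (simp add: algebra_simps)
qed

lemma log2_one_plus_mult_ge:
  fixes k x :: real
  assumes "1 \<le> k" and "0 \<le> x" and "x \<le> 1"
  shows "log 2 (1 + k) * log 2 (1 + x) \<le> log 2 (1 + k * x)"
proof -
  define a where "a = log 2 (1 + k)"
  have "1 \<le> a"
    using \<open>1 \<le> k\<close> by (simp add: a_def)
  have "2 powr a = 1 + k"
    using \<open>1 \<le> k\<close> by (simp add: a_def)
  then have "(1 + x) powr a \<le> 1 + k * x"
    using one_plus_powr_le_chord[OF \<open>1 \<le> a\<close> \<open>0 \<le> x\<close> \<open>x \<le> 1\<close>] by simp
  then have "log 2 ((1 + x) powr a) \<le> log 2 (1 + k * x)"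
    using assms by (subst log_le_cancel_iff) (auto intro: add_pos_nonneg)
  then show ?thesis
    using \<open>0 \<le> x\<close> by (simp add: log_powr a_def mult.commute)
qed

theorem mainTheorem11:
  fixes k :: nat and x :: real
  assumes "0 \<le> x" and "x \<le> 1"
  shows "log 2 (1 + real k * x) \<ge> log 2 (1 + real k) * log 2 (1 + x)"
proof (cases "k = 0")
  case True
  then show ?thesis by simp
next
  case False
  then show ?thesis
    using log2_one_plus_mult_ge[of "real k" x] assms by simp
qed

end
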